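(* Let $\delta>0$ and $\epsilon>2\delta\sum_{i\in\mathcal I}\pi_i$. Let $w\ge2$, let $(\mathbf x^w,\beta^w)$ be an optimal solution of $\mathbf{RMP}$ at iteration $w$, and let $i\in\mathcal I$. If there exists $\hat w\in\{1,\dots,w-1\}$ such that $\|x^w_i-x^{\hat w}_i\|\le\frac{\epsilon-2\delta\sum_{i'\in\mathcal I}\pi_{i'}}{2\alpha_x\sum_{i'\in\mathcal I}\pi_{i'}}$, then $\overline\theta^w_i-\beta^w_i\le\frac{\epsilon}{\sum_{i'\in\mathcal I}\pi_{i'}}$.
   Context: Consider $\min_{\mathbf x\in\mathcal X}f(\mathbf x)+\sum_{i\in\mathcal I}\pi_ig(x_i)$, where $\mathcal X$ is compact, $\mathcal I$ is finite, each $x_i$ is a (possibly overlapping) subvector of $\mathbf x$, $\pi_i\ge0$ with $\sum_i\pi_i>0$, and $g$ is a convex function with bounded subgradients: there is a finite constant $\alpha_x>0$ such that every subgradient of $g$ has 1-norm at most $\alpha_x$ ($\|\cdot\|$ denotes the 1-norm). A Benders scheme produces iterates $\mathbf x^{w'}$, $w'=1,2,\dots$; at each iteration $w'$ and for each $i$, the subproblem $g(x^{w'}_i)$ is solved to $\delta$-optimality, giving numbers $\underline\theta^{w'}_i\le g(x^{w'}_i)\le\overline\theta^{w'}_i$ with $\overline\theta^{w'}_i-\underline\theta^{w'}_i\le\delta$, and a vector $\underline\lambda^{w'}_i$ with $\|\underline\lambda^{w'}_i\|\le\alpha_x$ such that $\underline\theta^{w'}_i+(\underline\lambda^{w'}_i)^\top(z-x^{w'}_i)\le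 g(z)$ for all $z$. The relaxed master problem at iteration $w$ is $\mathbf{RMP}$: $\min_{\mathbf x\in\mathcal X,\beta}f(\mathbf x)+\sum_i\pi_i\beta_i$ s.t. $\beta_i\ge\underline\theta^{w'}_i+(\underline\lambda^{w'}_i)^\top(x_i-x^{w'}_i)$ for $w'=1,\dots,w-1$, $i\in\mathcal I$; its optimal solution defines $\mathbf x^w$ (with components $x^w_i$) and $\beta^w$. *)

theory Defs
  imports "HOL-Analysis.Analysis"
begin

definition l1norm :: "real ^ 'm \<Rightarrow> real" where
  "l1norm v = (\<Sum>j\<in>UNIV. \<bar>v $ j\<bar>)"

definition subvec :: "('m \<Rightarrow> 'n) \<Rightarrow> real ^ 'n \<Rightarrow> real ^ 'm" where
  "subvec s x = (\<chi> j. x $ s j)"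

definition is_subgradient :: "(real ^ 'm \<Rightarrow> real) \<Rightarrow> real ^ 'm \<Rightarrow> real ^ 'm \<Rightarrow> bool" where
  "is_subgradient g z lam \<longleftrightarrow> (\<forall>y. g z + lam \<bullet> (y - z) \<le> g y)"

definition rmp_feasible ::
  "(real ^ 'n) set \<Rightarrow> 'i set \<Rightarrow> ('i \<Rightarrow> 'm \<Rightarrow> 'n) \<Rightarrow> (nat \<Rightarrow> real ^ 'n)
   \<Rightarrow> (nat \<Rightarrow> 'i \<Rightarrow> real) \<Rightarrow> (nat \<Rightarrow> 'i \<Rightarrow> real ^ 'm) \<Rightarrow> nat
   \<Rightarrow> real ^ 'n \<Rightarrow> ('i \<Rightarrow> real) \<Rightarrow> bool" where
  "rmp_feasible X I sel xs thlo lam w x beta \<longleftrightarrow>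
     x \<in> X \<and>
     (\<forall>w'\<in>{1..<w}. \<forall>i\<in>I.
        thlo w' i + lam w' i \<bullet> (subvec (sel i) x - subvec (sel i) (xs w')) \<le> beta i)"

definition rmp_optimal ::
  "(real ^ 'n \<Rightarrow> real) \<Rightarrow> ('i \<Rightarrow> real) \<Rightarrow> (real ^ 'n) set \<Rightarrow> 'i set \<Rightarrow> ('i \<Rightarrow> 'm \<Rightarrow> 'n)
   \<Rightarrow> (nat \<Rightarrow> real ^ 'n) \<Rightarrow> (nat \<Rightarrow> 'i \<Rightarrow> real) \<Rightarrow> (nat \<Rightarrow> 'i \<Rightarrow> real ^ 'm) \<Rightarrow> nat
   \<Rightarrow> real ^ 'n \<Rightarrow> ('i \<Rightarrow> real) \<Rightarrow> bool" where
  "rmp_optimal f \<pi> X I sel xs thlo lam w x beta \<longleftrightarrow>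
     rmp_feasible X I sel xs thlo lam w x beta \<and>
     (\<forall>x' beta'. rmp_feasible X I sel xs thlo lam w x' beta' \<longrightarrow>
        f x + (\<Sum>i\<in>I. \<pi> i * beta i) \<le> f x' + (\<Sum>i\<in>I. \<pi> i * beta' i))"

end

theory Submission
  imports Defs
begin

text \<open>The upper estimate at iteration w exceeds the lower one by at most \<delta>. Two cuts carry
  this estimate to the nearby earlier iterate and back: the cut of iteration w, evaluated at
  the earlier iterate, and the cut of the earlier iteration, which the master solution
  satisfies. Each costs \<alpha> times the 1-norm distance of the iterates, as the cut slopes are
  bounded by \<alpha>. So the gap is at most 2\<delta> plus 2\<alpha> times that distance, which the closeness
  hypothesis bounds by \<epsilon> over the total weight.\<close>

lemma l1norm_nonneg: "0 \<le> l1norm v"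
  unfolding l1norm_def by (simp add: sum_nonneg)

lemma abs_inner_le_l1norm_mult:
  fixes a b :: "real ^ 'm::finite"
  shows "\<bar>a \<bullet> b\<bar> \<le> l1norm a * l1norm b"
proof -
  have "\<bar>a \<bullet> b\<bar> = \<bar>\<Sum>j\<in>UNIV. a $ j * b $ j\<bar>"
    by (simp add: inner_vec_def)
  also have "\<dots> \<le> (\<Sum>j\<in>UNIV. \<bar>a $ j\<bar> * \<bar>b $ j\<bar>)"
    unfolding abs_mult[symmetric] by (rule sum_abs)
  also have "\<dots> \<le> (\<Sum>j\<in>UNIV. l1norm a * \<bar>b $ j\<bar>)"
  proof (rule sum_mono)
    fix j
    have "\<bar>a $ j\<bar> \<le> l1norm a"
      unfolding l1norm_def by (rule member_le_sum) auto
    then show "\<bar>a $ j\<bar> * \<bar>b $ j\<bar> \<le> l1norm a * \<bar>b $ j\<bar>"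
      by (simp add: mult_right_mono)
  qed
  also have "\<dots> = l1norm a * l1norm b"
    by (simp add: l1norm_def sum_distrib_left)
  finally show ?thesis .
qed

lemma abs_inner_le_if_l1norm_le:
  fixes a b :: "real ^ 'm::finite"
  assumes "l1norm a \<le> \<alpha>"
  shows "\<bar>a \<bullet> b\<bar> \<le> \<alpha> * l1norm b"
  using abs_inner_le_l1norm_mult[of a b] mult_right_mono[OF assms l1norm_nonneg[of b]]
  by (rule order_trans)

lemma cut_gap_le:
  fixes y z \<mu> \<nu> :: "real ^ 'm::finite"
  assumes cut_y_at_z: "\<theta>y + \<mu> \<bullet> (z - y) \<le> \<beta>"
    and cut_z_at_y: "\<theta>z + \<nu> \<bullet> (y - z) \<le> g y"
    and upper_y: "g y \<le> \<Theta>y" "\<Theta>y - \<theta>y \<le> \<delta>"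
    and upper_z: "\<Theta>z - \<theta>z \<le> \<delta>"
    and slope_y: "l1norm \<mu> \<le> \<alpha>"
    and slope_z: "l1norm \<nu> \<le> \<alpha>"
  shows "\<Theta>z - \<beta> \<le> 2 * \<delta> + 2 * \<alpha> * l1norm (z - y)"
proof -
  have "\<Theta>z - \<delta> \<le> \<theta>z"
    using upper_z by simp
  also have "\<dots> \<le> g y + \<nu> \<bullet> (z - y)"
    using cut_z_at_y by (simp add: inner_diff_right)
  also have "\<dots> \<le> \<Theta>y + \<alpha> * l1norm (z - y)"
    using upper_y(1) abs_inner_le_if_l1norm_le[OF slope_z, of "z - y"] by linarith
  also have "\<dots> \<le> \<theta>y + \<delta> + \<alpha> * l1norm (z - y)"
    using upper_y(2) by simp
  also have "\<dots> \<le> \<beta> + \<delta> + 2 * \<alpha> * l1norm (z - y)"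
    using cut_y_at_z abs_inner_le_if_l1norm_le[OF slope_y, of "z - y"] by linarith
  finally show ?thesis
    by simp
qed

theorem lemma16:
  fixes f :: "real ^ ('n::finite) \<Rightarrow> real"
    and X :: "(real ^ 'n) set"
    and I :: "'i set"
    and sel :: "'i \<Rightarrow> ('m::finite) \<Rightarrow> 'n"
    and \<pi> :: "'i \<Rightarrow> real"
    and g :: "real ^ 'm \<Rightarrow> real"
    and \<alpha> \<delta> \<epsilon> :: real
    and xs :: "nat \<Rightarrow> real ^ 'n"
    and thlo thhi :: "nat \<Rightarrow> 'i \<Rightarrow> real"
    and lam :: "nat \<Rightarrow> 'i \<Rightarrow> real ^ 'm"
    and beta :: "nat \<Rightarrow> 'i \<Rightarrow> real"
    and w :: nat and i :: 'i
  assumes X_compact: "compact X"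
    and I_finite: "finite I"
    and pi_nonneg: "\<forall>i\<in>I. \<pi> i \<ge> 0"
    and pi_pos: "(\<Sum>i\<in>I. \<pi> i) > 0"
    and g_convex: "convex_on UNIV g"
    and alpha_pos: "\<alpha> > 0"
    and subgrad_bound: "\<forall>z v. is_subgradient g z v \<longrightarrow> l1norm v \<le> \<alpha>"
    and bounds: "\<forall>w'\<ge>1. \<forall>i\<in>I. thlo w' i \<le> g (subvec (sel i) (xs w'))
                      \<and> g (subvec (sel i) (xs w')) \<le> thhi w' i
                      \<and> thhi w' i - thlo w' i \<le> \<delta>"
    and lam_bound: "\<forall>w'\<ge>1. \<forall>i\<in>I. l1norm (lam w' i) \<le> \<alpha>"
    and cuts_valid: "\<forall>w'\<ge>1. \<forall>i\<in>I. \<forall>z.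
                      thlo w' i + lam w' i \<bullet> (z - subvec (sel i) (xs w')) \<le> g z"
    and delta_pos: "\<delta> > 0"
    and eps: "\<epsilon> > 2 * \<delta> * (\<Sum>i\<in>I. \<pi> i)"
    and w2: "w \<ge> 2"
    and opt: "rmp_optimal f \<pi> X I sel xs thlo lam w (xs w) (beta w)"
    and iI: "i \<in> I"
    and close: "\<exists>wh\<in>{1..w-1}.
       l1norm (subvec (sel i) (xs w) - subvec (sel i) (xs wh))
         \<le> (\<epsilon> - 2 * \<delta> * (\<Sum>i'\<in>I. \<pi> i')) / (2 * \<alpha> * (\<Sum>i'\<in>I. \<pi> i'))"
  shows "thhi w i - beta w i \<le> \<epsilon> / (\<Sum>i'\<in>I. \<pi> i')"
proof -
  define S where "S = (\<Sum>i'\<in>I. \<pi> i')"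
  define x where "x = (\<lambda>k. subvec (sel i) (xs k))"
  have "{1..w-1} = {1..<w}"
    using w2 by auto
  then obtain wh where wh: "wh \<in> {1..<w}"
    and dist: "l1norm (x w - x wh) \<le> (\<epsilon> - 2 * \<delta> * S) / (2 * \<alpha> * S)"
    using close unfolding S_def x_def by auto
  have "thlo wh i + lam wh i \<bullet> (x w - x wh) \<le> beta w i"
    using opt wh iI unfolding rmp_optimal_def rmp_feasible_def x_def by simp
  then have "thhi w i - beta w i \<le> 2 * \<delta> + 2 * \<alpha> * l1norm (x w - x wh)"
  proof (rule cut_gap_le)
    show "thlo w i + lam w i \<bullet> (x wh - x w) \<le> g (x wh)"
      using cuts_valid w2 iI unfolding x_def by simp
    show "g (x wh) \<le> thhi wh i" "thhi wh i - thlo wh i \<le> \<delta>" "l1norm (lam wh i) \<le> \<alpha>"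
      using bounds lam_bound wh iI unfolding x_def by simp_all
    show "thhi w i - thlo w i \<le> \<delta>" "l1norm (lam w i) \<le> \<alpha>"
      using bounds lam_bound w2 iI by simp_all
  qed
  also have "\<dots> \<le> 2 * \<delta> + (\<epsilon> - 2 * \<delta> * S) / S"
    using dist alpha_pos pi_pos unfolding S_def by (simp add: field_simps)
  also have "\<dots> = \<epsilon> / S"
    using pi_pos unfolding S_def by (simp add: field_simps)
  finally show ?thesis
    unfolding S_def .
qed

end
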